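(* Let $c$ be a prefix equivariant statistic and $\theta>0$. Let $2\le k\le N$, $p=e_{k-1}=12\cdots(k-1)$ and $q=e_k=12\cdots k$. Let $R$ be the set of permutations $r\in\mathfrak S_k$ with $r\ne q$ whose $(k-1)$-st prefix flattening equals $p$. Then $$\widehat S^c(p)=\widehat{\bar S}(q)+\widehat S^c(q)\sum_{r\in R}\theta^{c(r)-c(q)},\qquad \widehat S(p)=\widehat S(q)\sum_{r\in R}\theta^{c(r)-c(q)}.$$
   Context: Permutations of $\{1,\dots,m\}$ are written in one-line notation; $\mathfrak S_m$ is the set of all of them. Fix $N\ge1$, a statistic $c:\bigcup_{m=1}^N\mathfrak S_m\to\mathbb Z_{\ge0}$ and a real $\theta>0$. Prefixes and containment: - A prefix is an element of $\bigcup_{m=1}^N\mathfrak S_m$. - $\pi^{(i)}\in\mathfrak S_i$ denotes the unique permutation with the same relative order as $\pi_1,\dots,\pi_i$. - A prefix $r\in\mathfrak S_n$ contains $p\in\mathfrak S_m$ ($m\le n$) if $r^{(m)}=p$. - For $p\in\mathfrak S_m$ and $\pi\in\mathfrak S_N$: $\pi$ is $p$-prefixed if $\pi^{(m)}=p$, and $p$-winnable if moreover $\pi_m=N$. Probabilities: - $D(p)=\sum_{p\text{-prefixed }\pi\in\mathfrak S_N}\theta^{c(\pi)}$. - $S(p)=\big(\sum_{p\text{-winnable }\pi}\theta^{c(\pi)}\big)/D(p)$. - $S^c(p)=0$ if $p\in\mathfrak S_N$; for $p\in\mathfrak S_m$ with $m<N$, $S^c(p)=\big(\sum_{q'\in\mathfrak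 S_{m+1}\text{ containing }p}D(q')\bar S(q')\big)/D(p)$. - $\bar S(p)=\max(S(p),S^c(p))$. Numerators over the standard denominator $D(p)$ are written $\widehat S(p)=D(p)S(p)$, $\widehat S^c(p)=D(p)S^c(p)$ and $\widehat{\bar S}(p)=D(p)\bar S(p)$. Let $e_k=12\cdots k$. For $q\in\mathfrak S_k$ and $\pi\in\mathfrak S_m$ ($k\le m\le N$) with $\pi_1<\cdots<\pi_k$, $\sigma_q\cdot\pi\in\mathfrak S_m$ is given by $(\sigma_q\cdot\pi)_i=\pi_{q_i}$ for $i\le k$ and $(\sigma_q\cdot\pi)_i=\pi_i$ for $i>k$. The statistic $c$ is prefix equivariant if $c(\pi)-c(\sigma_q\cdot\pi)=c(e_k)-c(q)$ for all $k$, all $q\in\mathfrak S_k$, and all such $\pi$. *)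

theory Defs
  imports Complex_Main
begin

definition perms :: "nat \<Rightarrow> nat list set" where
  "perms m = {xs. distinct xs \<and> set xs = {1..m}}"

(* standardization (flattening): the permutation with the same relative order *)
definition flat :: "nat list \<Rightarrow> nat list" where
  "flat xs = map (\<lambda>x. card {y \<in> set xs. y \<le> x}) xs"

definition pref :: "nat \<Rightarrow> nat list \<Rightarrow> nat list" where
  "pref i xs = flat (take i xs)"

definition idp :: "nat \<Rightarrow> nat list" where
  "idp k = [1..<Suc k]"

definition prefixed :: "nat \<Rightarrow> nat list \<Rightarrow> nat list set" where
  "prefixed N p = {\<pi> \<in> perms N. pref (length p) \<pi> = p}"

definition winnable :: "nat \<Rightarrow> nat list \<Rightarrow> nat list set" where
  "winnable N p = {\<pi> \<in> prefixed N p. \<pi> ! (length p - 1) = N}"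

definition D :: "nat \<Rightarrow> (nat list \<Rightarrow> nat) \<Rightarrow> real \<Rightarrow> nat list \<Rightarrow> real" where
  "D N c \<theta> p = (\<Sum>\<pi>\<in>prefixed N p. \<theta> ^ c \<pi>)"

definition S :: "nat \<Rightarrow> (nat list \<Rightarrow> nat) \<Rightarrow> real \<Rightarrow> nat list \<Rightarrow> real" where
  "S N c \<theta> p = (\<Sum>\<pi>\<in>winnable N p. \<theta> ^ c \<pi>) / D N c \<theta> p"

(* S^c by recursion on the remaining length N - |p| *)
fun Sc_aux :: "nat \<Rightarrow> nat \<Rightarrow> (nat list \<Rightarrow> nat) \<Rightarrow> real \<Rightarrow> nat list \<Rightarrow> real" where
  "Sc_aux 0 N c \<theta> p = 0"
| "Sc_aux (Suc j) N c \<theta> p =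
     (\<Sum>q'\<in>{q' \<in> perms (Suc (length p)). pref (length p) q' = p}.
        D N c \<theta> q' * max (S N c \<theta> q') (Sc_aux j N c \<theta> q')) / D N c \<theta> p"

definition Sc :: "nat \<Rightarrow> (nat list \<Rightarrow> nat) \<Rightarrow> real \<Rightarrow> nat list \<Rightarrow> real" where
  "Sc N c \<theta> p = Sc_aux (N - length p) N c \<theta> p"

definition Sbar :: "nat \<Rightarrow> (nat list \<Rightarrow> nat) \<Rightarrow> real \<Rightarrow> nat list \<Rightarrow> real" where
  "Sbar N c \<theta> p = max (S N c \<theta> p) (Sc N c \<theta> p)"

definition S_hat :: "nat \<Rightarrow> (nat list \<Rightarrow> nat) \<Rightarrow> real \<Rightarrow> nat list \<Rightarrow> real" where
  "S_hat N c \<theta> p = D N c \<theta> p * S N c \<theta> p"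

definition Sc_hat :: "nat \<Rightarrow> (nat list \<Rightarrow> nat) \<Rightarrow> real \<Rightarrow> nat list \<Rightarrow> real" where
  "Sc_hat N c \<theta> p = D N c \<theta> p * Sc N c \<theta> p"

definition Sbar_hat :: "nat \<Rightarrow> (nat list \<Rightarrow> nat) \<Rightarrow> real \<Rightarrow> nat list \<Rightarrow> real" where
  "Sbar_hat N c \<theta> p = D N c \<theta> p * Sbar N c \<theta> p"

definition act :: "nat list \<Rightarrow> nat list \<Rightarrow> nat list" where
  "act q \<pi> = map (\<lambda>i. \<pi> ! (q ! i - 1)) [0..<length q] @ drop (length q) \<pi>"

definition prefix_equivariant :: "nat \<Rightarrow> (nat list \<Rightarrow> nat) \<Rightarrow> bool" where
  "prefix_equivariant N c \<longleftrightarrow>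
     (\<forall>k m q \<pi>. 1 \<le> k \<longrightarrow> k \<le> m \<longrightarrow> m \<le> N \<longrightarrow> q \<in> perms k \<longrightarrow> \<pi> \<in> perms m \<longrightarrow>
        sorted_wrt (<) (take k \<pi>) \<longrightarrow>
        int (c \<pi>) - int (c (act q \<pi>)) = int (c (idp k)) - int (c q))"

end

theory Submission
  imports Defs "HOL-Combinatorics.Permutations"
begin

text \<open>
  For r in S_k, the action sigma_r permutes list positions. It maps the permutations
  prefixed by s bijectively onto those prefixed by sigma_r . s and fixes every position
  beyond k; when s begins with e_k, prefix equivariance says that it multiplies theta^c by
  the constant theta^(c(r) - c(e_k)). So D scales by that factor, while S and S^c are
  invariant.

  The children of p = e_(k-1) are q = e_k and the r = sigma_r . q with r in R, and no r in R
  is winnable because its maximum sits at position k - 1 rather than k; this is the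
  recursion for S^c. For S, group the p-winnable permutations by their k-prefix r in R:
  as r_(k-1) = k, sigma_r carries the q-winnable permutations (maximum at position k)
  exactly onto that group (maximum at position k - 1).
\<close>

section \<open>Permutations and flattening\<close>

lemma length_perms: assumes "r \<in> perms k" shows "length r = k"
proof -
  have "length r = card (set r)" using assms by (simp add: perms_def distinct_card[symmetric])
  also have "set r = {1..k}" using assms by (simp add: perms_def)
  finally show ?thesis by simp
qed

lemma set_perms: "r \<in> perms k \<Longrightarrow> set r = {1..k}"
  and distinct_perms: "r \<in> perms k \<Longrightarrow> distinct r"
  by (simp_all add: perms_def)

lemma finite_perms: "finite (perms m)"
proof (rule finite_subset)
  show "perms m \<subseteq> {xs. set xs \<subseteq> {1..m} \<and> length xs = m}"
    by (auto simp: length_perms perms_def)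
qed (rule finite_lists_length_eq, simp)

lemma strict_mono_on_rank: "strict_mono_on (set (xs::nat list)) (\<lambda>x. card {y \<in> set xs. y \<le> x})"
proof (rule strict_mono_onI)
  fix x x' assume "x \<in> set xs" "x' \<in> set xs" "x < x'"
  then have "{y \<in> set xs. y \<le> x} \<subseteq> {y \<in> set xs. y \<le> x'}"
    "x' \<in> {y \<in> set xs. y \<le> x'}" "x' \<notin> {y \<in> set xs. y \<le> x}" by auto
  then have "{y \<in> set xs. y \<le> x} \<subset> {y \<in> set xs. y \<le> x'}" by blast
  then show "card {y \<in> set xs. y \<le> x} < card {y \<in> set xs. y \<le> x'}"
    by (rule psubset_card_mono[rotated]) simp
qed

lemma length_flat [simp]: "length (flat xs) = length xs"
  by (simp add: flat_def)

lemma length_pref [simp]: "length (pref m xs) = min m (length xs)"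
  by (simp add: pref_def)

lemma flat_map_strict_mono:
  assumes f: "strict_mono_on (set xs) f" shows "flat (map f xs) = flat xs"
  unfolding flat_def map_map
proof (rule map_cong[OF refl])
  fix x assume x: "x \<in> set xs"
  have "{y \<in> set (map f xs). y \<le> f x} = f ` {y \<in> set xs. y \<le> x}"
    using strict_mono_on_less_eq[OF f _ x] by auto
  moreover have "inj_on f {y \<in> set xs. y \<le> x}"
    using strict_mono_on_imp_inj_on[OF f] by (rule inj_on_subset) auto
  ultimately show "((\<lambda>y. card {z \<in> set (map f xs). z \<le> y}) \<circ> f) x = card {y \<in> set xs. y \<le> x}"
    by (simp add: card_image)
qed

lemma flat_take_flat: "flat (take k (flat xs)) = flat (take k xs)"
proof -
  have "take k (flat xs) = map (\<lambda>x. card {y \<in> set xs. y \<le> x}) (take k xs)"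
    by (simp add: flat_def take_map)
  moreover have "strict_mono_on (set (take k xs)) (\<lambda>x. card {y \<in> set xs. y \<le> x})"
    using strict_mono_on_rank by (rule monotone_on_subset) (rule set_take_subset)
  ultimately show ?thesis by (simp add: flat_map_strict_mono)
qed

lemma pref_pref: "k \<le> m \<Longrightarrow> pref k (pref m \<pi>) = pref k \<pi>"
  by (simp add: pref_def flat_take_flat min_def)

lemma flat_eq_self: assumes "set xs = {1..length xs}" shows "flat xs = xs"
proof -
  have "{y \<in> set xs. y \<le> x} = {1..x}" if "x \<in> set xs" for x
    using assms that by auto
  then show ?thesis unfolding flat_def by (simp add: map_idI)
qed

lemma flat_in_perms: assumes d: "distinct xs" shows "flat xs \<in> perms (length xs)"
proof -
  let ?f = "\<lambda>x. card {y \<in> set xs. y \<le> x}"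
  have inj: "inj_on ?f (set xs)" using strict_mono_on_rank by (rule strict_mono_on_imp_inj_on)
  have "?f ` set xs \<subseteq> {1..length xs}"
  proof
    fix z assume "z \<in> ?f ` set xs"
    then obtain x where x: "x \<in> set xs" "z = ?f x" by auto
    have "{y \<in> set xs. y \<le> x} \<noteq> {}" using x by auto
    then have "1 \<le> z" using x by (simp add: Suc_leI card_gt_0_iff)
    moreover have "z \<le> card (set xs)" using x by (auto intro: card_mono)
    ultimately show "z \<in> {1..length xs}" using distinct_card[OF d] by simp
  qed
  moreover have "card (?f ` set xs) = length xs" using card_image[OF inj] distinct_card[OF d] by simp
  ultimately have "?f ` set xs = {1..length xs}" by (intro card_subset_eq) auto
  then show ?thesis unfolding perms_def flat_def using inj by (simp add: distinct_map d)
qed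

lemma flat_nth_Max:
  assumes "i < length xs" "\<forall>y\<in>set xs. y \<le> xs ! i" "distinct xs"
  shows "flat xs ! i = length xs"
proof -
  have "{y \<in> set xs. y \<le> xs ! i} = set xs" using assms by auto
  then show ?thesis using assms distinct_card by (simp add: flat_def)
qed

lemma sorted_wrt_less_of_flat: assumes "sorted_wrt (<) (flat xs)" shows "sorted_wrt (<) xs"
proof -
  have "sorted_wrt (\<lambda>a b. card {y \<in> set xs. y \<le> a} < card {y \<in> set xs. y \<le> b}) xs"
    using assms by (simp add: flat_def sorted_wrt_map)
  then show ?thesis
    by (rule sorted_wrt_mono_rel[rotated]) (use strict_mono_on_less[OF strict_mono_on_rank] in blast)
qed

lemma length_idp [simp]: "length (idp k) = k"
  by (simp add: idp_def)

lemma nth_idp [simp]: "i < k \<Longrightarrow> idp k ! i = Suc i"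
  by (simp add: idp_def del: upt_Suc)

lemma set_idp: "set (idp k) = {1..k}"
  by (auto simp: idp_def)

lemma idp_in_perms: "idp k \<in> perms k"
  by (simp add: perms_def set_idp) (simp add: idp_def)

lemma take_idp: "m \<le> k \<Longrightarrow> take m (idp k) = idp m"
  by (simp add: idp_def take_upt del: upt_Suc)

lemma pref_idp: "m \<le> k \<Longrightarrow> pref m (idp k) = idp m"
  by (simp add: pref_def take_idp flat_eq_self set_idp)

lemma sorted_take_if_pref_idp: "pref k \<pi> = idp k \<Longrightarrow> sorted_wrt (<) (take k \<pi>)"
  by (rule sorted_wrt_less_of_flat) (simp add: pref_def idp_def sorted_wrt_iff_nth_less del: upt_Suc)

lemma pref_nth_if_nth_eq_max:
  assumes \<pi>: "\<pi> \<in> perms N" and "m \<le> N" "i < m" "\<pi> ! i = N"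
  shows "pref m \<pi> ! i = m"
proof -
  have "flat (take m \<pi>) ! i = length (take m \<pi>)"
    by (rule flat_nth_Max) (use assms length_perms[OF \<pi>] set_perms[OF \<pi>] distinct_perms[OF \<pi>]
        set_take_subset[of m \<pi>] in auto)
  then show ?thesis using assms length_perms[OF \<pi>] by (simp add: pref_def)
qed

section \<open>The action as a permutation of positions\<close>

definition act_perm :: "nat list \<Rightarrow> nat \<Rightarrow> nat" where
  "act_perm r i = (if i < length r then r ! i - 1 else i)"

lemma act_perm_permutes:
  assumes r: "r \<in> perms k" and "k \<le> n"
  shows "act_perm r permutes {..<n}"
proof -
  have "act_perm r permutes {..<k}"
  proof (rule inj_imp_permutes)
    have entry: "r ! i \<in> {1..k}" if "i < k" for i
      using that set_perms[OF r] length_perms[OF r] nth_mem by blast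
    show "act_perm r i \<in> {..<k}" if "i \<in> {..<k}" for i
      using entry[of i] that length_perms[OF r] by (auto simp: act_perm_def)
    show "inj_on (act_perm r) {..<k}"
    proof (rule inj_onI)
      fix i j assume "i \<in> {..<k}" "j \<in> {..<k}" "act_perm r i = act_perm r j"
      then have "r ! i = r ! j"
        using entry[of i] entry[of j] length_perms[OF r] by (auto simp: act_perm_def)
      then show "i = j"
        using \<open>i \<in> {..<k}\<close> \<open>j \<in> {..<k}\<close> distinct_perms[OF r] length_perms[OF r]
        by (simp add: nth_eq_iff_index_eq)
    qed
    show "\<And>i. i \<notin> {..<k} \<Longrightarrow> act_perm r i = i"
      using length_perms[OF r] by (simp add: act_perm_def)
  qed simp
  then show ?thesis by (rule permutes_subset) (use assms in auto)
qed

lemma act_eq_permute_list: "length r \<le> length xs \<Longrightarrow> act r xs = permute_list (act_perm r) xs"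
  by (rule nth_equalityI) (auto simp: act_def act_perm_def permute_list_def nth_append)

lemma act_idp: assumes r: "r \<in> perms k" shows "act r (idp k) = r"
proof (rule nth_equalityI)
  have \<sigma>: "act_perm r permutes {..<length (idp k)}" using act_perm_permutes[OF r] by simp
  fix i assume "i < length (act r (idp k))"
  then have i: "i < k" using length_perms[OF r] by (simp add: act_def)
  then have "r ! i \<in> {1..k}" using set_perms[OF r] length_perms[OF r] nth_mem by blast
  then have "idp k ! (r ! i - 1) = r ! i" by (subst nth_idp) auto
  then show "act r (idp k) ! i = r ! i"
    using i length_perms[OF r] permute_list_nth[OF \<sigma>, of i]
    by (simp add: act_eq_permute_list act_perm_def)
qed (simp add: act_def length_perms[OF r])

lemma take_permute_list:
  "\<sigma> permutes {..<m} \<Longrightarrow> m \<le> length xs \<Longrightarrow> take m (permute_list \<sigma> xs) = permute_list \<sigma> (take m xs)"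
  by (rule nth_equalityI) (auto simp: permute_list_def dest: permutes_in_image[THEN iffD2])

lemma flat_permute_list:
  "\<sigma> permutes {..<length xs} \<Longrightarrow> flat (permute_list \<sigma> xs) = permute_list \<sigma> (flat xs)"
  unfolding flat_def by (simp add: permute_list_map)

lemma pref_permute_list:
  assumes "\<sigma> permutes {..<m}" "m \<le> length xs"
  shows "pref m (permute_list \<sigma> xs) = permute_list \<sigma> (pref m xs)"
  using assms by (simp add: pref_def take_permute_list flat_permute_list min_def)

lemma permute_list_in_perms:
  assumes "\<sigma> permutes {..<n}" "\<pi> \<in> perms n" shows "permute_list \<sigma> \<pi> \<in> perms n"
proof -
  have "\<sigma> permutes {..<length \<pi>}" using assms length_perms by simp
  then show ?thesis using assms(2) by (simp add: perms_def)
qed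

lemma permute_list_inv_permute_list:
  "\<sigma> permutes {..<length xs} \<Longrightarrow> permute_list (inv \<sigma>) (permute_list \<sigma> xs) = xs"
  by (metis permute_list_compose permute_list_id permutes_inv permutes_inv_o(1))

lemma permute_list_permute_list_inv:
  "\<sigma> permutes {..<length xs} \<Longrightarrow> permute_list \<sigma> (permute_list (inv \<sigma>) xs) = xs"
  by (metis permute_list_compose permute_list_id permutes_inv_o(2))

lemma permute_list_prefixed_subset:
  assumes \<sigma>: "\<sigma> permutes {..<m}" and "m \<le> length s"
  shows "permute_list \<sigma> ` prefixed n s \<subseteq> prefixed n (permute_list \<sigma> s)"
proof
  fix t assume "t \<in> permute_list \<sigma> ` prefixed n s"
  then obtain \<pi> where t: "t = permute_list \<sigma> \<pi>" and \<pi>: "\<pi> \<in> perms n" "pref (length s) \<pi> = s"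
    by (auto simp: prefixed_def)
  have "length s \<le> n" using arg_cong[OF \<pi>(2), of length] length_perms[OF \<pi>(1)] by simp
  have \<sigma>s: "\<sigma> permutes {..<length s}" using permutes_subset[OF \<sigma>] assms by auto
  have "\<sigma> permutes {..<n}" using permutes_subset[OF \<sigma>] assms \<open>length s \<le> n\<close> by auto
  then show "t \<in> prefixed n (permute_list \<sigma> s)"
    using \<pi> pref_permute_list[OF \<sigma>s] length_perms[OF \<pi>(1)] \<open>length s \<le> n\<close>
    by (simp add: t prefixed_def permute_list_in_perms)
qed

lemma prefixed_permute_list:
  assumes \<sigma>: "\<sigma> permutes {..<m}" and "m \<le> length s" "length s \<le> n"
  shows "prefixed n (permute_list \<sigma> s) = permute_list \<sigma> ` prefixed n s"
proof
  show "permute_list \<sigma> ` prefixed n s \<subseteq> prefixed n (permute_list \<sigma> s)"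
    by (rule permute_list_prefixed_subset[OF \<sigma> \<open>m \<le> length s\<close>])
  show "prefixed n (permute_list \<sigma> s) \<subseteq> permute_list \<sigma> ` prefixed n s"
  proof
    fix t assume t: "t \<in> prefixed n (permute_list \<sigma> s)"
    have \<sigma>t: "\<sigma> permutes {..<length t}"
      using permutes_subset[OF \<sigma>] assms t length_perms by (auto simp: prefixed_def)
    have \<sigma>s: "\<sigma> permutes {..<length s}" using permutes_subset[OF \<sigma>] assms by auto
    have "permute_list (inv \<sigma>) t \<in> prefixed n (permute_list (inv \<sigma>) (permute_list \<sigma> s))"
      using permute_list_prefixed_subset[OF permutes_inv[OF \<sigma>], of "permute_list \<sigma> s" n] t assms
      by auto
    then have "permute_list (inv \<sigma>) t \<in> prefixed n s"
      by (simp add: permute_list_inv_permute_list[OF \<sigma>s])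
    moreover have "t = permute_list \<sigma> (permute_list (inv \<sigma>) t)"
      by (simp add: permute_list_permute_list_inv[OF \<sigma>t])
    ultimately show "t \<in> permute_list \<sigma> ` prefixed n s" by blast
  qed
qed

lemma length_prefixed: "\<pi> \<in> prefixed n s \<Longrightarrow> length \<pi> = n"
  by (simp add: prefixed_def length_perms)

lemma prefixed_act:
  assumes r: "r \<in> perms k" and "k \<le> length s" "length s \<le> n"
  shows "prefixed n (act r s) = act r ` prefixed n s"
proof -
  have "act r ` prefixed n s = permute_list (act_perm r) ` prefixed n s"
    using assms length_perms[OF r] by (intro image_cong) (auto simp: act_eq_permute_list length_prefixed)
  then show ?thesis
    using assms length_perms[OF r]
    by (simp add: act_eq_permute_list prefixed_permute_list[OF act_perm_permutes[OF r order.refl]])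
qed

lemma length_act [simp]: "length r \<le> length xs \<Longrightarrow> length (act r xs) = length xs"
  by (simp add: act_def)

lemma nth_act: "length r \<le> length xs \<Longrightarrow> i < length xs \<Longrightarrow> act r xs ! i = xs ! act_perm r i"
  by (simp add: act_def act_perm_def nth_append)

lemma winnable_act:
  assumes r: "r \<in> perms k" and "k < length s" "length s \<le> n"
  shows "winnable n (act r s) = act r ` winnable n s"
proof -
  have last_fixed: "act r \<pi> ! (length s - 1) = \<pi> ! (length s - 1)" if "\<pi> \<in> prefixed n s" for \<pi>
    using that assms length_perms[OF r] by (simp add: nth_act act_perm_def length_prefixed)
  have "winnable n (act r s) = {t \<in> act r ` prefixed n s. t ! (length s - 1) = n}"
    using assms length_perms[OF r] by (simp add: winnable_def prefixed_act[OF r])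
  also have "\<dots> = act r ` {\<pi> \<in> prefixed n s. act r \<pi> ! (length s - 1) = n}"
    by blast
  also have "\<dots> = act r ` winnable n s"
    unfolding winnable_def using last_fixed by (metis (mono_tags, lifting))
  finally show ?thesis .
qed

lemma prefixed_subset_prefixed_pref:
  assumes "m \<le> length s" shows "prefixed n s \<subseteq> prefixed n (pref m s)"
proof
  fix \<pi> assume \<pi>: "\<pi> \<in> prefixed n s"
  then have "pref m \<pi> = pref m s"
    using pref_pref[OF assms, of \<pi>] by (simp add: prefixed_def)
  then show "\<pi> \<in> prefixed n (pref m s)" using \<pi> assms by (simp add: prefixed_def min_def)
qed

lemma inj_on_act:
  assumes r: "r \<in> perms k" and "\<And>\<pi>. \<pi> \<in> A \<Longrightarrow> k \<le> length \<pi>"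
  shows "inj_on (act r) A"
proof (rule inj_on_inverseI)
  fix \<pi> assume "\<pi> \<in> A"
  then have "act_perm r permutes {..<length \<pi>}" "length r \<le> length \<pi>"
    using assms act_perm_permutes[OF r] length_perms[OF r] by auto
  then show "permute_list (inv (act_perm r)) (act r \<pi>) = \<pi>"
    by (simp add: act_eq_permute_list permute_list_inv_permute_list)
qed

section \<open>Equivariance of D, S and S^c\<close>

definition act_weight :: "(nat list \<Rightarrow> nat) \<Rightarrow> real \<Rightarrow> nat \<Rightarrow> nat list \<Rightarrow> real" where
  "act_weight c \<theta> k r = \<theta> powi (int (c r) - int (c (idp k)))"

lemma Sc_aux_Suc_prefixed:
  "Sc_aux (Suc j) N c \<theta> p =
     (\<Sum>q'\<in>prefixed (Suc (length p)) p. D N c \<theta> q' * max (S N c \<theta> q') (Sc_aux j N c \<theta> q'))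
       / D N c \<theta> p"
  by (simp add: prefixed_def)

context
  fixes N :: nat and c :: "nat list \<Rightarrow> nat" and \<theta> :: real and k :: nat and r :: "nat list"
  assumes equivariant: "prefix_equivariant N c" and \<theta>: "\<theta> \<noteq> 0"
    and k: "1 \<le> k" and r: "r \<in> perms k"
begin

lemma power_c_act:
  assumes \<pi>: "\<pi> \<in> perms N" and "k \<le> N" and "pref k \<pi> = idp k"
  shows "\<theta> ^ c (act r \<pi>) = act_weight c \<theta> k r * \<theta> ^ c \<pi>"
proof -
  have "int (c \<pi>) - int (c (act r \<pi>)) = int (c (idp k)) - int (c r)"
    using equivariant k r assms sorted_take_if_pref_idp[OF assms(3)] length_perms[OF \<pi>]
    unfolding prefix_equivariant_def by blast
  then have "int (c (act r \<pi>)) = int (c \<pi>) + (int (c r) - int (c (idp k)))" by linarith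
  then have "\<theta> powi int (c (act r \<pi>)) = \<theta> powi int (c \<pi>) * act_weight c \<theta> k r"
    using \<theta> by (simp add: power_int_add act_weight_def)
  then show ?thesis by (simp add: mult.commute)
qed

lemma sum_power_c_act:
  assumes "k \<le> N" and A: "A \<subseteq> {\<pi> \<in> perms N. pref k \<pi> = idp k}"
  shows "(\<Sum>\<pi>\<in>act r ` A. \<theta> ^ c \<pi>) = act_weight c \<theta> k r * (\<Sum>\<pi>\<in>A. \<theta> ^ c \<pi>)"
proof -
  have "inj_on (act r) A"
    using A assms length_perms by (intro inj_on_act[OF r]) auto
  then have "(\<Sum>\<pi>\<in>act r ` A. \<theta> ^ c \<pi>) = (\<Sum>\<pi>\<in>A. \<theta> ^ c (act r \<pi>))"
    by (simp add: sum.reindex)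
  also have "\<dots> = (\<Sum>\<pi>\<in>A. act_weight c \<theta> k r * \<theta> ^ c \<pi>)"
    using A assms by (intro sum.cong refl power_c_act) auto
  finally show ?thesis by (simp add: sum_distrib_left)
qed

lemma D_act:
  assumes "k \<le> length s" "length s \<le> N" "pref k s = idp k"
  shows "D N c \<theta> (act r s) = act_weight c \<theta> k r * D N c \<theta> s"
proof -
  have "prefixed N s \<subseteq> {\<pi> \<in> perms N. pref k \<pi> = idp k}"
    using prefixed_subset_prefixed_pref[OF assms(1)] assms(3) by (auto simp: prefixed_def)
  then show ?thesis
    unfolding D_def prefixed_act[OF r assms(1,2)] using assms by (intro sum_power_c_act) auto
qed

lemma S_act:
  assumes "k < length s" "length s \<le> N" "pref k s = idp k"
  shows "S N c \<theta> (act r s) = S N c \<theta> s"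
proof -
  have "winnable N s \<subseteq> {\<pi> \<in> perms N. pref k \<pi> = idp k}"
    using prefixed_subset_prefixed_pref[of k s N] assms by (auto simp: winnable_def prefixed_def)
  then have "(\<Sum>\<pi>\<in>winnable N (act r s). \<theta> ^ c \<pi>)
      = act_weight c \<theta> k r * (\<Sum>\<pi>\<in>winnable N s. \<theta> ^ c \<pi>)"
    unfolding winnable_act[OF r assms(1,2)] using assms by (intro sum_power_c_act) auto
  moreover have "act_weight c \<theta> k r \<noteq> 0" using \<theta> by (simp add: act_weight_def)
  ultimately show ?thesis using D_act assms by (simp add: S_def)
qed

lemma Sc_aux_act:
  "k \<le> length s \<Longrightarrow> length s + j \<le> N \<Longrightarrow> pref k s = idp k \<Longrightarrow>
     Sc_aux j N c \<theta> (act r s) = Sc_aux j N c \<theta> s"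
proof (induction j arbitrary: s)
  case (Suc j)
  let ?f = "\<lambda>t. D N c \<theta> t * max (S N c \<theta> t) (Sc_aux j N c \<theta> t)"
  let ?children = "prefixed (Suc (length s)) s"
  have step: "?f (act r t) = act_weight c \<theta> k r * ?f t" if t: "t \<in> ?children" for t
  proof -
    have t_len: "length t = Suc (length s)" using t by (rule length_prefixed)
    have "t \<in> prefixed (Suc (length s)) (idp k)"
      using prefixed_subset_prefixed_pref[OF Suc.prems(1)] t Suc.prems(3) by auto
    then have t_pref: "pref k t = idp k" by (simp add: prefixed_def)
    have "D N c \<theta> (act r t) = act_weight c \<theta> k r * D N c \<theta> t"
      by (rule D_act) (use t_len t_pref Suc.prems in auto)
    moreover have "S N c \<theta> (act r t) = S N c \<theta> t"
      by (rule S_act) (use t_len t_pref Suc.prems in auto)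
    moreover have "Sc_aux j N c \<theta> (act r t) = Sc_aux j N c \<theta> t"
      by (rule Suc.IH) (use t_len t_pref Suc.prems in auto)
    ultimately show ?thesis by simp
  qed
  have inj: "inj_on (act r) ?children"
    using Suc.prems by (intro inj_on_act[OF r]) (auto simp: length_prefixed)
  have len: "length (act r s) = length s" using Suc.prems length_perms[OF r] by simp
  have "Sc_aux (Suc j) N c \<theta> (act r s) = (\<Sum>t\<in>act r ` ?children. ?f t) / D N c \<theta> (act r s)"
    unfolding Sc_aux_Suc_prefixed len using Suc.prems by (simp add: prefixed_act[OF r])
  also have "\<dots> = (\<Sum>t\<in>?children. ?f (act r t)) / D N c \<theta> (act r s)"
    by (simp add: sum.reindex[OF inj])
  also have "\<dots> = (act_weight c \<theta> k r * (\<Sum>t\<in>?children. ?f t))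
                     / (act_weight c \<theta> k r * D N c \<theta> s)"
    using step D_act Suc.prems by (simp add: sum_distrib_left)
  also have "\<dots> = Sc_aux (Suc j) N c \<theta> s"
    unfolding Sc_aux_Suc_prefixed using \<theta> by (simp add: act_weight_def)
  finally show ?case .
qed simp

end

section \<open>Extensions of e_(k-1)\<close>

lemma D_idp_pos:
  assumes "\<theta> > 0" "m \<le> N" shows "D N c \<theta> (idp m) > 0"
proof -
  have "idp N \<in> prefixed N (idp m)" using assms by (simp add: prefixed_def idp_in_perms pref_idp)
  moreover have "finite (prefixed N (idp m))" using finite_perms[of N] by (simp add: prefixed_def)
  ultimately show ?thesis unfolding D_def using assms by (intro sum_pos) auto
qed

lemma Sc_aux_nonneg:
  assumes "\<theta> \<ge> 0" shows "Sc_aux j N c \<theta> p \<ge> 0"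
proof (cases j)
  case (Suc i)
  have D: "D N c \<theta> x \<ge> 0" for x unfolding D_def using assms by (intro sum_nonneg) simp
  moreover have "S N c \<theta> x \<ge> 0" for x
    unfolding S_def using assms D by (intro divide_nonneg_nonneg sum_nonneg) auto
  ultimately show ?thesis using Suc
    by (auto intro!: divide_nonneg_nonneg sum_nonneg mult_nonneg_nonneg
        intro: order.trans[OF _ max.cobounded1])
qed simp

lemma idp_Suc: "idp (Suc k) = idp k @ [Suc k]"
  by (simp add: idp_def)

lemma eq_idp_if_pref_pred_idp:
  assumes r: "r \<in> perms k" and "1 \<le> k" and pref: "pref (k - 1) r = idp (k - 1)"
    and last: "r ! (k - 1) = k"
  shows "r = idp k"
proof -
  let ?t = "take (k - 1) r"
  have r_split: "r = ?t @ [k]"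
    using take_Suc_conv_app_nth[of "k - 1" r] assms length_perms[OF r] by simp
  have "distinct (?t @ [k])" "set (?t @ [k]) = {1..k}"
    using distinct_perms[OF r] set_perms[OF r] by (subst (asm) (1 2) r_split, simp)+
  then have "set ?t = {1..k} - {k}" by auto
  also have "\<dots> = {1..k - 1}" by auto
  finally have "set ?t = {1..k - 1}" .
  then have "?t = idp (k - 1)"
    using pref flat_eq_self[of ?t] length_perms[OF r] assms by (simp add: pref_def)
  then show ?thesis using r_split idp_Suc[of "k - 1"] assms by simp
qed

text \<open>Lists are 0-indexed: the conclusion says r_(k-1) = k.\<close>

lemma nth_pred_eq_if_pref_pred_idp:
  assumes r: "r \<in> perms k" and "2 \<le> k" and pref: "pref (k - 1) r = idp (k - 1)" and "r \<noteq> idp k"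
  shows "r ! (k - 2) = k"
proof -
  have "k \<in> set r" using set_perms[OF r] assms by simp
  then obtain i where i: "i < k" "r ! i = k" using length_perms[OF r] by (auto simp: in_set_conv_nth)
  have "i \<noteq> k - 1" using eq_idp_if_pref_pred_idp[OF r _ pref] i assms by auto
  then have "pref (k - 1) r ! i = k - 1"
    using i pref_nth_if_nth_eq_max[OF r, of "k - 1" i] by simp
  moreover have "pref (k - 1) r ! i = Suc i" using pref i \<open>i \<noteq> k - 1\<close> by simp
  ultimately have "i = k - 2" by simp
  then show ?thesis using i by simp
qed

definition proper_extensions :: "nat \<Rightarrow> nat list set" where
  "proper_extensions k = {r \<in> perms k. r \<noteq> idp k \<and> pref (k - 1) r = idp (k - 1)}"

lemma finite_proper_extensions: "finite (proper_extensions k)"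
  using finite_perms[of k] by (simp add: proper_extensions_def)

lemma prefixed_idp_pred:
  "1 \<le> k \<Longrightarrow> prefixed k (idp (k - 1)) = insert (idp k) (proper_extensions k)"
  by (auto simp: prefixed_def proper_extensions_def idp_in_perms pref_idp)

lemma winnable_proper_extension:
  assumes "r \<in> proper_extensions k" "1 \<le> k" "k \<le> N"
  shows "winnable N r = {}"
proof (rule ccontr)
  assume "winnable N r \<noteq> {}"
  then obtain \<pi> where \<pi>: "\<pi> \<in> perms N" "pref k \<pi> = r" "\<pi> ! (k - 1) = N"
    using assms length_perms by (auto simp: winnable_def prefixed_def proper_extensions_def)
  then have "r ! (k - 1) = k" using pref_nth_if_nth_eq_max[OF \<pi>(1), of k "k - 1"] assms by simp
  then show False using eq_idp_if_pref_pred_idp[of r k] assms by (auto simp: proper_extensions_def)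
qed

lemma Sc_hat_idp_pred:
  assumes equivariant: "prefix_equivariant N c" and \<theta>: "\<theta> > 0" and k: "2 \<le> k" "k \<le> N"
  shows "Sc_hat N c \<theta> (idp (k - 1)) = Sbar_hat N c \<theta> (idp k)
           + Sc_hat N c \<theta> (idp k) * (\<Sum>r\<in>proper_extensions k. act_weight c \<theta> k r)"
proof -
  let ?f = "\<lambda>t. D N c \<theta> t * max (S N c \<theta> t) (Sc_aux (N - k) N c \<theta> t)"
  have extension: "?f r = act_weight c \<theta> k r * Sc_hat N c \<theta> (idp k)"
    if r: "r \<in> proper_extensions k" for r
  proof -
    have r_perm: "r \<in> perms k" using r by (simp add: proper_extensions_def)
    have "S N c \<theta> r = 0" using winnable_proper_extension[OF r] k by (simp add: S_def)
    moreover have "D N c \<theta> r = act_weight c \<theta> k r * D N c \<theta> (idp k)"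
      using D_act[OF equivariant _ _ r_perm, where s = "idp k"] \<theta> k
      by (simp add: act_idp[OF r_perm] pref_idp)
    moreover have "Sc_aux (N - k) N c \<theta> r = Sc_aux (N - k) N c \<theta> (idp k)"
      using Sc_aux_act[OF equivariant _ _ r_perm, where s = "idp k"] \<theta> k
      by (simp add: act_idp[OF r_perm] pref_idp)
    ultimately show ?thesis
      using Sc_aux_nonneg[of \<theta> "N - k" N c r] \<theta> by (simp add: Sc_hat_def Sc_def)
  qed
  have "D N c \<theta> (idp (k - 1)) > 0" by (rule D_idp_pos) (use \<theta> k in auto)
  then have "Sc_hat N c \<theta> (idp (k - 1)) = (\<Sum>t\<in>insert (idp k) (proper_extensions k). ?f t)"
    using k prefixed_idp_pred[of k]
    by (simp add: Sc_hat_def Sc_def Suc_diff_le Sc_aux_Suc_prefixed del: Sc_aux.simps)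
  also have "\<dots> = ?f (idp k) + (\<Sum>r\<in>proper_extensions k. ?f r)"
    by (rule sum.insert[OF finite_proper_extensions]) (simp add: proper_extensions_def)
  also have "(\<Sum>r\<in>proper_extensions k. ?f r)
      = Sc_hat N c \<theta> (idp k) * (\<Sum>r\<in>proper_extensions k. act_weight c \<theta> k r)"
    by (simp add: extension sum_distrib_left mult.commute)
  finally show ?thesis by (simp add: Sbar_hat_def Sbar_def Sc_def)
qed

lemma pref_winnable_idp_pred:
  assumes k: "2 \<le> k" "k \<le> N" and \<pi>: "\<pi> \<in> winnable N (idp (k - 1))"
  shows "pref k \<pi> \<in> proper_extensions k"
proof -
  have \<pi>_perm: "\<pi> \<in> perms N" and "pref (k - 1) \<pi> = idp (k - 1)" and "\<pi> ! (k - 2) = N"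
    using \<pi> by (simp_all add: winnable_def prefixed_def numeral_2_eq_2)
  have "pref k \<pi> \<in> perms k"
    using flat_in_perms[of "take k \<pi>"] distinct_perms[OF \<pi>_perm] length_perms[OF \<pi>_perm] k
    by (simp add: pref_def min_def split: if_splits)
  moreover have "pref (k - 1) (pref k \<pi>) = idp (k - 1)"
    using pref_pref[of "k - 1" k \<pi>] \<open>pref (k - 1) \<pi> = idp (k - 1)\<close> by simp
  moreover have "pref k \<pi> ! (k - 2) \<noteq> idp k ! (k - 2)"
    using pref_nth_if_nth_eq_max[OF \<pi>_perm, of k "k - 2"] \<open>\<pi> ! (k - 2) = N\<close> k by simp
  ultimately show ?thesis by (auto simp: proper_extensions_def)
qed

lemma winnable_idp_pred_fiber:
  assumes k: "2 \<le> k" "k \<le> N" and r: "r \<in> proper_extensions k"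
  shows "{\<pi> \<in> winnable N (idp (k - 1)). pref k \<pi> = r} = act r ` winnable N (idp k)"
proof -
  have r_perm: "r \<in> perms k" and r_pref: "pref (k - 1) r = idp (k - 1)"
    using r by (simp_all add: proper_extensions_def)
  have "r ! (k - 2) = k"
    using nth_pred_eq_if_pref_pred_idp[OF r_perm k(1) r_pref] r by (simp add: proper_extensions_def)
  then have moved: "act r \<pi> ! (k - 2) = \<pi> ! (k - 1)" if "\<pi> \<in> prefixed N (idp k)" for \<pi>
    using that k length_perms[OF r_perm] by (simp add: nth_act act_perm_def length_prefixed)
  have "prefixed N r \<subseteq> prefixed N (idp (k - 1))"
    using prefixed_subset_prefixed_pref[of "k - 1" r N] r_pref length_perms[OF r_perm] by simp
  then have "{\<pi> \<in> winnable N (idp (k - 1)). pref k \<pi> = r} = {\<pi> \<in> prefixed N r. \<pi> ! (k - 2) = N}"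
    using k length_perms[OF r_perm] by (auto simp: winnable_def prefixed_def numeral_2_eq_2)
  also have "\<dots> = {t \<in> act r ` prefixed N (idp k). t ! (k - 2) = N}"
    using prefixed_act[OF r_perm, of "idp k" N] k by (simp add: act_idp[OF r_perm])
  also have "\<dots> = act r ` {\<pi> \<in> prefixed N (idp k). act r \<pi> ! (k - 2) = N}"
    by blast
  also have "\<dots> = act r ` winnable N (idp k)"
    unfolding winnable_def using moved by (metis (mono_tags, lifting) length_idp)
  finally show ?thesis .
qed

lemma S_hat_idp_pred:
  assumes equivariant: "prefix_equivariant N c" and \<theta>: "\<theta> > 0" and k: "2 \<le> k" "k \<le> N"
  shows "S_hat N c \<theta> (idp (k - 1))
           = S_hat N c \<theta> (idp k) * (\<Sum>r\<in>proper_extensions k. act_weight c \<theta> k r)"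
proof -
  let ?pow = "\<lambda>\<pi>. \<theta> ^ c \<pi>"
  have S_hat_sum: "S_hat N c \<theta> (idp m) = sum ?pow (winnable N (idp m))" if "m \<le> N" for m
    using D_idp_pos[OF \<theta> that, of c] by (simp add: S_hat_def S_def)
  have "finite (winnable N (idp (k - 1)))"
    using finite_perms[of N] by (rule finite_subset[rotated]) (auto simp: winnable_def prefixed_def)
  then have "sum ?pow (winnable N (idp (k - 1)))
      = (\<Sum>r\<in>proper_extensions k. sum ?pow {\<pi> \<in> winnable N (idp (k - 1)). pref k \<pi> = r})"
    by (intro sum.group[symmetric] finite_proper_extensions image_subsetI pref_winnable_idp_pred[OF k])
  also have "\<dots> = (\<Sum>r\<in>proper_extensions k. act_weight c \<theta> k r * sum ?pow (winnable N (idp k)))"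
  proof (rule sum.cong[OF refl])
    fix r assume r: "r \<in> proper_extensions k"
    have "winnable N (idp k) \<subseteq> {\<pi> \<in> perms N. pref k \<pi> = idp k}"
      by (auto simp: winnable_def prefixed_def)
    then show "sum ?pow {\<pi> \<in> winnable N (idp (k - 1)). pref k \<pi> = r}
        = act_weight c \<theta> k r * sum ?pow (winnable N (idp k))"
      unfolding winnable_idp_pred_fiber[OF k r] using r k \<theta>
      by (intro sum_power_c_act[OF equivariant]) (auto simp: proper_extensions_def)
  qed
  finally show ?thesis using S_hat_sum k by (simp add: sum_distrib_right mult.commute)
qed

theorem theorem3p6:
  fixes N k :: nat and c :: "nat list \<Rightarrow> nat" and \<theta> :: real
  assumes "prefix_equivariant N c" and "\<theta> > 0" and "2 \<le> k" and "k \<le> N"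
  defines "p \<equiv> idp (k - 1)" and "q \<equiv> idp k"
  defines "R \<equiv> {r \<in> perms k. r \<noteq> q \<and> pref (k - 1) r = p}"
  shows "Sc_hat N c \<theta> p = Sbar_hat N c \<theta> q
           + Sc_hat N c \<theta> q * (\<Sum>r\<in>R. \<theta> powi (int (c r) - int (c q)))
       \<and> S_hat N c \<theta> p = S_hat N c \<theta> q * (\<Sum>r\<in>R. \<theta> powi (int (c r) - int (c q)))"
proof -
  have "R = proper_extensions k" by (simp add: R_def p_def q_def proper_extensions_def)
  then have "(\<Sum>r\<in>R. \<theta> powi (int (c r) - int (c q)))
      = (\<Sum>r\<in>proper_extensions k. act_weight c \<theta> k r)"
    by (simp add: act_weight_def q_def)
  then show ?thesis
    using Sc_hat_idp_pred[OF assms(1-4)] S_hat_idp_pred[OF assms(1-4)] by (simp add: p_def q_def)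
qed

end
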